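(* Let $p,q$ be integers with $p\ge2$ and $0<q<p$, and let $D=D(g,f)$ be the recursive matrix with $g(x)=(1-p^2x)^{-q/p}$ and $f(x)=\dfrac{-x}{1-p^2x}$. Then for all integers $n\ge0$ and $m\ge0$, \[ D_{n,-m}=Q(p,q)_{n,m}=\frac{p^{2(n+m)}\,(q/p)_n\,\bigl((p-q)/p\bigr)_m}{(n+m)!}. \] That is, the matrix of $(p,q)$-super Patalan numbers forms the lower left quadrant ($n\ge0$, $k=-m\le0$) of $D$, with the column order reversed.
   Context: For power series $g(x)=\sum_{k\ge0}g_kx^k$ and $f(x)=\sum_{k\ge0}f_kx^k$ with $f_0=0$ and $f_1\ne0$, the recursive matrix $D(g,f)$ is the doubly infinite matrix with entries $D_{n,k}=[x^n]\bigl(g(x)f(x)^k\bigr)$ for all integers $n,k$, where for $k<0$, $f(x)^k$ denotes the multiplicative inverse of $f(x)^{-k}$ in the ring of formal Laurent series. The $(p,q)$-super Patalan numbers are $Q(p,q)_{n,m}=\frac{p^{2(n+m)}(q/p)_n((p-q)/p)_m}{(n+m)!}$ for $n,m\ge0$, where $(\alpha)_r=\alpha(\alpha+1)\cdots(\alpha+r-1)$ is the rising factorial with $(\alpha)_0=1$ (for $p=2,q=1$ these are the super Catalan numbers $\frac{(2n)!(2m)!}{n!\,m!\,(n+m)!}$). *)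

theory Defs
  imports "HOL-Computational_Algebra.Formal_Laurent_Series"
begin

definition recmat :: "'a::field fps \<Rightarrow> 'a fps \<Rightarrow> int \<Rightarrow> int \<Rightarrow> 'a" where
  "recmat g f n k = fls_nth (fps_to_fls g * (fps_to_fls f) powi k) n"

definition super_patalan :: "int \<Rightarrow> int \<Rightarrow> nat \<Rightarrow> nat \<Rightarrow> real" where
  "super_patalan p q n m =
     (real_of_int p) ^ (2 * (n + m)) * pochhammer (real_of_int q / real_of_int p) n
       * pochhammer (real_of_int (p - q) / real_of_int p) m / fact (n + m)"

text \<open>g(x) = (1 - p^2 x)^(-q/p), as the generalized binomial series.\<close>
definition patalan_g :: "int \<Rightarrow> int \<Rightarrow> real fps" where
  "patalan_g p q = fps_compose (fps_binomial (- (real_of_int q / real_of_int p)))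
                     (- (of_int (p^2) * fps_X))"

definition patalan_f :: "int \<Rightarrow> real fps" where
  "patalan_f p = - fps_X * inverse (1 - of_int (p^2) * fps_X)"

end

theory Submission imports Defs begin

text \<open>Write \<open>f = x H\<close> with \<open>H(0) \<noteq> 0\<close>; then column \<open>-m\<close> of \<open>D(g,f)\<close> is the power series
  \<open>g H^(-m)\<close> shifted by \<open>m\<close>. Here \<open>1/H = -(1 - p^2 x)\<close>, so \<open>g H^(-m) = (-1)^m (1 - p^2 x)^(m - q/p)\<close>
  is a single binomial series. Its coefficients are generalized binomial coefficients, which
  split into the two Pochhammer symbols of the super Patalan number.\<close>

lemma recmat_neg_column:
  fixes G H :: "'a::field fps"
  assumes "H $ 0 \<noteq> 0"
  shows "recmat G (fps_X * H) (int n) (- int m) = (G * inverse H ^ m) $ (n + m)"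
proof -
  have inverse_XH: "inverse (fps_to_fls (fps_X * H)) = fls_X_inv * fps_to_fls (inverse H)"
  proof (rule inverse_unique)
    have "fps_to_fls (fps_X * H) * (fls_X_inv * fps_to_fls (inverse H))
        = (fls_X * fls_X_inv) * fps_to_fls (H * inverse H)"
      by (simp add: fls_times_fps_to_fls mult_ac)
    also have "\<dots> = 1"
      using assms by (simp add: fls_X_times_conv_shift fls_X_inv_times_conv_shift inverse_mult_eq_1')
    finally show "fps_to_fls (fps_X * H) * (fls_X_inv * fps_to_fls (inverse H)) = 1" .
  qed
  have "fps_to_fls (fps_X * H) powi (- int m) = (fls_X_inv * fps_to_fls (inverse H)) ^ m"
    by (simp only: power_int_minus power_int_of_nat flip: inverse_XH) (rule power_inverse[symmetric])
  also have "\<dots> = fls_shift (int m) (fps_to_fls (inverse H ^ m))"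
    by (simp only: power_mult_distrib fps_to_fls_power fls_X_inv_power_times_conv_shift)
  finally have "fps_to_fls G * fps_to_fls (fps_X * H) powi (- int m)
      = fls_shift (int m) (fps_to_fls (G * inverse H ^ m))"
    by (simp only: fls_times_fps_to_fls fls_shifted_times_simps)
  then show ?thesis
    by (simp add: recmat_def flip: of_nat_add)
qed

lemma fps_nth_mult_minus_power:
  fixes G L :: "'a::comm_ring_1 fps"
  shows "(G * (- L) ^ m) $ N = (-1) ^ m * (G * L ^ m) $ N"
proof -
  have "(- L) ^ m = fps_const ((-1) ^ m) * L ^ m"
    by (induction m) (simp_all add: algebra_simps flip: fps_const_neg fps_const_mult)
  then show ?thesis
    by (simp only: mult.left_commute[of _ "fps_const _"] fps_mult_left_const_nth)
qed

lemma fps_binomial_compose_times_power_nth: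
  fixes a c :: "'a::field_char_0"
  shows "((fps_binomial a oo - (fps_const c * fps_X)) * (1 - fps_const c * fps_X) ^ m) $ N
       = (a + of_nat m gchoose N) * (- c) ^ N"
proof -
  define Y :: "'a fps" where "Y = fps_const (- c) * fps_X"
  have Y0: "Y $ 0 = 0"
    by (simp add: Y_def)
  have minus_cX: "- (fps_const c * fps_X) = Y"
    by (simp add: Y_def fps_const_neg)
  have "1 - fps_const c * fps_X = (1 + fps_X) oo Y"
    by (simp add: Y_def fps_compose_add_distrib fps_const_neg)
  then have "(1 - fps_const c * fps_X) ^ m = fps_binomial (of_nat m) oo Y"
    by (simp add: fps_compose_power[OF Y0] fps_binomial_of_nat)
  then have "(fps_binomial a oo - (fps_const c * fps_X)) * (1 - fps_const c * fps_X) ^ m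
      = fps_binomial (a + of_nat m) oo Y"
    by (simp add: minus_cX fps_compose_mult_distrib[OF Y0] fps_binomial_add_mult)
  then show ?thesis
    by (simp add: Y_def fps_compose_linear)
qed

lemma gbinomial_shift_pochhammer:
  fixes a :: "'a::field_char_0"
  shows "(of_nat m - a gchoose (n + m))
       = (-1) ^ n * pochhammer a n * pochhammer (1 - a) m / fact (n + m)"
proof -
  have "pochhammer (a - of_nat m) m = (-1) ^ m * pochhammer (1 - a) m"
    using pochhammer_minus[of "of_nat m - a" m] by simp
  then have "pochhammer (a - of_nat m) (m + n) = (-1) ^ m * pochhammer (1 - a) m * pochhammer a n"
    by (simp add: pochhammer_product')
  then show ?thesis
    by (simp add: gbinomial_pochhammer add.commute[of n m] power_add mult_ac)
qed

theorem theorem4: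
  fixes p q :: int
  assumes "p \<ge> 2" and "0 < q" and "q < p"
  shows "\<forall>n m :: nat. recmat (patalan_g p q) (patalan_f p) (int n) (- int m)
           = super_patalan p q n m"
proof (intro allI)
  fix n m :: nat
  define c :: real where "c = of_int (p ^ 2)"
  define L :: "real fps" where "L = 1 - fps_const c * fps_X"
  define a :: real where "a = of_int q / of_int p"
  have p: "real_of_int p \<noteq> 0"
    using assms by simp
  have c: "(of_int (p ^ 2) :: real fps) = fps_const c"
    by (simp only: c_def fps_of_int)
  have f: "patalan_f p = fps_X * - inverse L"
    unfolding patalan_f_def L_def c by simp
  have g: "patalan_g p q = fps_binomial (- a) oo - (fps_const c * fps_X)"
    unfolding patalan_g_def a_def c ..
  have L0: "L $ 0 \<noteq> 0"
    by (simp add: L_def)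
  have "recmat (patalan_g p q) (patalan_f p) (int n) (- int m)
      = (patalan_g p q * inverse (- inverse L) ^ m) $ (n + m)"
    unfolding f by (rule recmat_neg_column) (simp add: L0)
  also have "\<dots> = (patalan_g p q * (- L) ^ m) $ (n + m)"
    by (simp only: fps_inverse_minus fps_inverse_idempotent[OF L0])
  also have "\<dots> = (-1) ^ m * (patalan_g p q * L ^ m) $ (n + m)"
    by (rule fps_nth_mult_minus_power)
  also have "\<dots> = (-1) ^ m * (of_nat m - a gchoose (n + m)) * (- c) ^ (n + m)"
    unfolding g L_def fps_binomial_compose_times_power_nth by simp
  also have "\<dots> = c ^ (n + m) * pochhammer a n * pochhammer (1 - a) m / fact (n + m)"
    by (simp add: gbinomial_shift_pochhammer power_minus[of c] power_add)
  also have "\<dots> = super_patalan p q n m"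
    using p by (simp add: super_patalan_def c_def a_def diff_divide_distrib flip: power_mult)
  finally show "recmat (patalan_g p q) (patalan_f p) (int n) (- int m) = super_patalan p q n m" .
qed

end
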